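(* For every integer $n \geq 3$, the chromatic number of the Kneser graph of triangulations of a convex $n$-gon satisfies \[\chi(\mathrm{KG}(\mathcal{T}_n)) = n-2.\]
   Context: Label the vertices of a convex $n$-gon by $1,2,\dots,n$ in cyclic order. Let $\mathrm{Diag}_n = \{\{i,j\} \subseteq [n] : i-j \not\equiv \pm 1 \pmod n\}$ be the set of diagonals. Two diagonals cross if they meet in the interior of the polygon (equivalently, their endpoints are four distinct labels that interleave in the cyclic order). A triangulation is identified with the set of its diagonals (a maximal set of pairwise noncrossing diagonals, of size $n-3$), and $\mathcal{T}_n$ denotes the set of all triangulations. For a finite set system $\mathcal{F}$, the Kneser graph $\mathrm{KG}(\mathcal{F})$ has vertex set $\mathcal{F}$, with $F, F'$ adjacent iff $F \cap F' = \emptyset$. Thus two triangulations are adjacent iff they share no diagonal. *)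

theory Defs
  imports Main
begin

text \<open>Vertices of the convex n-gon are labelled 1..n in cyclic order.
  A diagonal is a 2-subset {i,j} of {1..n} with i - j not congruent to +1 or -1 mod n.\<close>
definition Diag :: "nat \<Rightarrow> nat set set" where
  "Diag n = {{i, j} | i j. i \<in> {1..n} \<and> j \<in> {1..n} \<and> i \<noteq> j \<and>
      (int i - int j) mod int n \<noteq> 1 \<and> (int j - int i) mod int n \<noteq> 1}"

text \<open>Two diagonals cross iff their endpoints are four distinct labels interleaving
  in the cyclic order (equivalently in the linear order of the labels 1..n).\<close>
definition crosses :: "nat set \<Rightarrow> nat set \<Rightarrow> bool" where
  "crosses d e \<longleftrightarrow> (\<exists>a b c x. ((d = {a, b} \<and> e = {c, x}) \<or> (d = {c, x} \<and> e = {a, b}))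
      \<and> a < c \<and> c < b \<and> b < x)"

definition triangulation :: "nat \<Rightarrow> nat set set \<Rightarrow> bool" where
  "triangulation n T \<longleftrightarrow> T \<subseteq> Diag n
      \<and> (\<forall>d\<in>T. \<forall>e\<in>T. \<not> crosses d e)
      \<and> (\<forall>d\<in>Diag n - T. \<exists>e\<in>T. crosses d e)"

definition Triangs :: "nat \<Rightarrow> nat set set set" where
  "Triangs n = {T. triangulation n T}"

definition kneser_adj :: "'a set \<Rightarrow> 'a set \<Rightarrow> bool" where
  "kneser_adj F G \<longleftrightarrow> F \<noteq> G \<and> F \<inter> G = {}"

definition chromatic_number :: "'v set \<Rightarrow> ('v \<Rightarrow> 'v \<Rightarrow> bool) \<Rightarrow> nat" where
  "chromatic_number V adj = (LEAST k. \<exists>f :: 'v \<Rightarrow> nat.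
      (\<forall>x\<in>V. f x < k) \<and> (\<forall>x\<in>V. \<forall>y\<in>V. adj x y \<longrightarrow> f x \<noteq> f y))"

end

theory Submission
  imports Defs
begin

text \<open>Colour a triangulation by the smallest neighbour \<open>m \<in> {3..n-1}\<close> of vertex 1, or by \<open>n\<close>
  if vertex 1 carries no diagonal: this uses \<open>n - 2\<close> colours, and two triangulations of the same
  colour share the diagonal \<open>{1, m}\<close>, respectively \<open>{2, n}\<close>.

  For the lower bound, a proper \<open>k\<close>-colouring of the triangulations of the \<open>(n+1)\<close>-gon yields one
  of the \<open>n\<close>-gon with \<open>k - 1\<close> colours. Insert the vertex \<open>n + 1\<close> between \<open>n\<close> and 1 and extend \<open>T\<close>
  either by the ear diagonal \<open>{1, n}\<close> or by \<open>{y, n + 1}\<close>, where \<open>y\<close> is the apex of the triangle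
  of \<open>T\<close> on the side \<open>{1, n}\<close>. Apex extensions of disjoint triangulations are disjoint, and so are
  an ear extension and an apex extension; ear extensions also miss the fan at \<open>n + 1\<close>. Colouring
  \<open>T\<close> by its apex extension, or by its ear extension when the former has the colour of the fan,
  is therefore proper and avoids the colour of the fan.\<close>

definition proper_colouring :: "'v set \<Rightarrow> ('v \<Rightarrow> 'v \<Rightarrow> bool) \<Rightarrow> nat \<Rightarrow> ('v \<Rightarrow> nat) \<Rightarrow> bool"
  where "proper_colouring V adj k f \<longleftrightarrow>
    (\<forall>x\<in>V. f x < k) \<and> (\<forall>x\<in>V. \<forall>y\<in>V. adj x y \<longrightarrow> f x \<noteq> f y)"

lemma chromatic_number_eqI:
  assumes "proper_colouring V adj k f"
    and "\<And>k' g. proper_colouring V adj k' g \<Longrightarrow> k \<le> k'"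
  shows "chromatic_number V adj = k"
  unfolding chromatic_number_def proper_colouring_def[symmetric]
proof (rule Least_equality)
  show "\<exists>f. proper_colouring V adj k f" using assms(1) by blast
next
  fix k' assume "\<exists>g. proper_colouring V adj k' g"
  then show "k \<le> k'" using assms(2) by blast
qed

lemma proper_colouring_skip_colour:
  assumes "w < k" and "\<And>x. x \<in> V \<Longrightarrow> f x < k \<and> f x \<noteq> w"
    and "\<And>x y. x \<in> V \<Longrightarrow> y \<in> V \<Longrightarrow> adj x y \<Longrightarrow> f x \<noteq> f y"
  shows "proper_colouring V adj (k - 1) (\<lambda>x. if w < f x then f x - 1 else f x)"
  unfolding proper_colouring_def
proof (intro conjI ballI impI)
  fix x assume "x \<in> V"
  then have "f x < k" "f x \<noteq> w" using assms(2) by auto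
  then show "(if w < f x then f x - 1 else f x) < k - 1" using \<open>w < k\<close> by auto
next
  fix x y assume "x \<in> V" "y \<in> V" "adj x y"
  then have "f x \<noteq> f y" "f x \<noteq> w" "f y \<noteq> w" using assms(2,3) by auto
  then show "(if w < f x then f x - 1 else f x) \<noteq> (if w < f y then f y - 1 else f y)" by auto
qed

lemma kneser_adjI: "X \<inter> Y = {} \<Longrightarrow> X \<noteq> {} \<Longrightarrow> kneser_adj X Y"
  unfolding kneser_adj_def by auto

definition is_diag :: "nat \<Rightarrow> nat \<Rightarrow> nat \<Rightarrow> bool" where
  "is_diag n i j \<longleftrightarrow> 1 \<le> i \<and> i + 2 \<le> j \<and> j \<le> n \<and> \<not> (i = 1 \<and> j = n)"

lemma diff_mod_eq_one_iff:
  fixes i j n :: nat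
  assumes "1 \<le> i" "i < j" "j \<le> n"
  shows "(int j - int i) mod int n = 1 \<longleftrightarrow> j = Suc i"
    and "(int i - int j) mod int n = 1 \<longleftrightarrow> i = 1 \<and> j = n"
proof -
  have pos: "(int j - int i) mod int n = int j - int i"
    using assms by (intro mod_pos_pos_trivial) auto
  then show "(int j - int i) mod int n = 1 \<longleftrightarrow> j = Suc i" by linarith
  have "(int i - int j) mod int n = (- (int j - int i)) mod int n"
    by (simp only: minus_diff_eq)
  also have "\<dots> = int n - (int j - int i)"
    unfolding zmod_zminus1_eq_if pos using assms by auto
  finally show "(int i - int j) mod int n = 1 \<longleftrightarrow> i = 1 \<and> j = n"
    using assms by linarith
qed

lemma mem_Diag_iff: "d \<in> Diag n \<longleftrightarrow> (\<exists>i j. d = {i, j} \<and> is_diag n i j)"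
proof
  assume "d \<in> Diag n"
  then obtain i j where d: "d = {i, j}" "i \<in> {1..n}" "j \<in> {1..n}" "i \<noteq> j"
    "(int i - int j) mod int n \<noteq> 1" "(int j - int i) mod int n \<noteq> 1"
    unfolding Diag_def by blast
  then consider "i < j" | "j < i" by linarith
  then show "\<exists>i j. d = {i, j} \<and> is_diag n i j"
  proof cases
    case 1
    then have "is_diag n i j" using d diff_mod_eq_one_iff[of i j n] unfolding is_diag_def by auto
    with d show ?thesis by blast
  next
    case 2
    then have "is_diag n j i" using d diff_mod_eq_one_iff[of j i n] unfolding is_diag_def by auto
    with d show ?thesis by (blast intro: insert_commute)
  qed
next
  assume "\<exists>i j. d = {i, j} \<and> is_diag n i j"
  then obtain i j where "d = {i, j}" "is_diag n i j" by blast
  then show "d \<in> Diag n" using diff_mod_eq_one_iff[of i j n]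
    unfolding Diag_def is_diag_def by (intro CollectI exI[of _ i] exI[of _ j]) auto
qed

lemma is_diag_Suc: "is_diag n i j \<Longrightarrow> is_diag (Suc n) i j"
  unfolding is_diag_def by auto

lemma crosses_iff:
  assumes "i < j" "k < l"
  shows "crosses {i, j} {k, l} \<longleftrightarrow> (i < k \<and> k < j \<and> j < l) \<or> (k < i \<and> i < l \<and> l < j)"
proof
  assume "crosses {i, j} {k, l}"
  then obtain a b c x
    where eq: "({i, j} = {a, b} \<and> {k, l} = {c, x}) \<or> ({i, j} = {c, x} \<and> {k, l} = {a, b})"
      and lt: "a < c" "c < b" "b < x"
    unfolding crosses_def by blast
  from eq assms lt have "(i = a \<and> j = b \<and> k = c \<and> l = x) \<or> (i = c \<and> j = x \<and> k = a \<and> l = b)"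
    by (auto simp: doubleton_eq_iff)
  with lt show "(i < k \<and> k < j \<and> j < l) \<or> (k < i \<and> i < l \<and> l < j)" by auto
next
  assume "(i < k \<and> k < j \<and> j < l) \<or> (k < i \<and> i < l \<and> l < j)"
  then show "crosses {i, j} {k, l}" unfolding crosses_def by blast
qed

lemma crosses_commute: "crosses d e \<longleftrightarrow> crosses e d"
  unfolding crosses_def by blast

lemma not_crosses_self: "\<not> crosses d d"
  unfolding crosses_def by (auto simp: doubleton_eq_iff)

lemma triangulationI:
  assumes "\<And>d. d \<in> T \<Longrightarrow> \<exists>i j. d = {i, j} \<and> is_diag n i j"
    and "\<And>d e. d \<in> T \<Longrightarrow> e \<in> T \<Longrightarrow> \<not> crosses d e"
    and "\<And>i j. is_diag n i j \<Longrightarrow> {i, j} \<notin> T \<Longrightarrow> \<exists>e\<in>T. crosses {i, j} e"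
  shows "triangulation n T"
  unfolding triangulation_def using assms by (auto simp: mem_Diag_iff)

lemma triangulation_obtain_diag:
  assumes "triangulation n T" "d \<in> T"
  obtains i j where "d = {i, j}" "is_diag n i j"
proof -
  have "d \<in> Diag n" using assms unfolding triangulation_def by blast
  then show ?thesis using that unfolding mem_Diag_iff by blast
qed

lemma triangulation_noncrossing:
  "triangulation n T \<Longrightarrow> d \<in> T \<Longrightarrow> e \<in> T \<Longrightarrow> \<not> crosses d e"
  unfolding triangulation_def by blast

lemma triangulation_maximal:
  assumes "triangulation n T" "is_diag n i j" "{i, j} \<notin> T"
  obtains k l where "{k, l} \<in> T" "is_diag n k l" "crosses {i, j} {k, l}"
proof -
  have "{i, j} \<in> Diag n - T" using assms by (auto simp: mem_Diag_iff)
  then obtain e where "e \<in> T" "crosses {i, j} e"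
    using assms(1) unfolding triangulation_def by blast
  then show ?thesis using that triangulation_obtain_diag[OF assms(1)] by metis
qed

lemma triangulation_mem_is_diag:
  assumes "triangulation n T" "{a, b} \<in> T"
  shows "is_diag n a b \<or> is_diag n b a"
proof -
  obtain i j where "{a, b} = {i, j}" "is_diag n i j"
    using triangulation_obtain_diag[OF assms] by metis
  then show ?thesis by (auto simp: doubleton_eq_iff)
qed

lemma triangulation_subset_atLeastAtMost:
  "triangulation n T \<Longrightarrow> d \<in> T \<Longrightarrow> d \<subseteq> {1..n}"
  by (elim triangulation_obtain_diag) (auto simp: is_diag_def)

lemma triangulation_side_notin: "triangulation n T \<Longrightarrow> {1, n} \<notin> T"
  by (auto elim!: triangulation_obtain_diag simp: is_diag_def doubleton_eq_iff)

lemma triangulation_three_iff: "triangulation 3 T \<longleftrightarrow> T = {}"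
proof -
  have "Diag 3 = {}" by (auto simp: mem_Diag_iff is_diag_def)
  then show ?thesis unfolding triangulation_def by auto
qed

lemma triangulation_isolated_first:
  assumes T: "triangulation n T" and n: "4 \<le> n" and iso: "\<And>x. {1, x} \<notin> T"
  shows "{2, n} \<in> T"
proof (rule ccontr)
  assume "{2, n} \<notin> T"
  moreover have "is_diag n 2 n" using n unfolding is_diag_def by auto
  ultimately obtain k l where "{k, l} \<in> T" "is_diag n k l" "crosses {2, n} {k, l}"
    using triangulation_maximal[OF T] by metis
  then have "k = 1" and "{k, l} \<in> T" using crosses_iff[of 2 n k l] n unfolding is_diag_def by auto
  with iso show False by blast
qed

lemma triangulation_isolated_last:
  assumes T: "triangulation n T" and n: "4 \<le> n" and iso: "\<And>x. {x, n} \<notin> T"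
  shows "{1, n - 1} \<in> T"
proof (rule ccontr)
  assume "{1, n - 1} \<notin> T"
  moreover have "is_diag n 1 (n - 1)" using n unfolding is_diag_def by auto
  ultimately obtain k l where "{k, l} \<in> T" "is_diag n k l" "crosses {1, n - 1} {k, l}"
    using triangulation_maximal[OF T] by metis
  moreover from this have "n - 1 < l" "l \<le> n"
    using crosses_iff[of 1 "n - 1" k l] n unfolding is_diag_def by auto
  then have "l = n" by arith
  ultimately have "{k, n} \<in> T" by simp
  with iso show False by blast
qed

definition fan :: "nat \<Rightarrow> nat set set" where
  "fan n = {{x, n} | x. 2 \<le> x \<and> x + 2 \<le> n}"

lemma fan_triangulation:
  assumes "3 \<le> n"
  shows "triangulation n (fan n)"
proof (rule triangulationI)
  fix d assume "d \<in> fan n"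
  then obtain x where "d = {x, n}" "2 \<le> x" "x + 2 \<le> n" unfolding fan_def by blast
  then have "is_diag n x n" unfolding is_diag_def by auto
  with \<open>d = {x, n}\<close> show "\<exists>i j. d = {i, j} \<and> is_diag n i j" by blast
next
  fix d e assume "d \<in> fan n" "e \<in> fan n"
  then obtain x z where "d = {x, n}" "e = {z, n}" "x < n" "z < n" unfolding fan_def by auto
  then show "\<not> crosses d e" using crosses_iff[of x n z n] by auto
next
  fix i j assume ij: "is_diag n i j" "{i, j} \<notin> fan n"
  have "j \<noteq> n"
  proof
    assume "j = n"
    with ij(1) have "{i, j} \<in> fan n" unfolding fan_def is_diag_def by auto
    with ij(2) show False ..
  qed
  with ij(1) have "{Suc i, n} \<in> fan n" "crosses {i, j} {Suc i, n}"
    unfolding fan_def is_diag_def by (auto simp: crosses_iff)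
  then show "\<exists>e\<in>fan n. crosses {i, j} e" by blast
qed

text \<open>The third vertex of the triangle of \<open>T\<close> on the side \<open>{1, 2}\<close>.\<close>

definition first_nbr :: "nat \<Rightarrow> nat set set \<Rightarrow> nat" where
  "first_nbr n T = (LEAST i. 3 \<le> i \<and> ({1, i} \<in> T \<or> i = n))"

lemma first_nbr:
  assumes T: "triangulation n T" and n: "3 \<le> n"
  shows "3 \<le> first_nbr n T" "first_nbr n T \<le> n"
    and "first_nbr n T < n \<Longrightarrow> {1, first_nbr n T} \<in> T"
    and "{1, i} \<in> T \<Longrightarrow> first_nbr n T < n"
proof -
  let ?P = "\<lambda>i. 3 \<le> i \<and> ({1, i} \<in> T \<or> i = n)"
  have "?P n" using n by simp
  then have "?P (first_nbr n T)" unfolding first_nbr_def by (rule LeastI)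
  then show "3 \<le> first_nbr n T" "first_nbr n T < n \<Longrightarrow> {1, first_nbr n T} \<in> T" by auto
  show "first_nbr n T \<le> n" unfolding first_nbr_def using \<open>?P n\<close> by (rule Least_le)
  assume "{1, i} \<in> T"
  moreover from this have "is_diag n 1 i"
    using triangulation_mem_is_diag[OF T] unfolding is_diag_def by fastforce
  ultimately have "?P i" "i < n" unfolding is_diag_def by auto
  have "first_nbr n T \<le> i" unfolding first_nbr_def using \<open>?P i\<close> by (rule Least_le)
  with \<open>i < n\<close> show "first_nbr n T < n" by simp
qed

lemma disjoint_triangulations_first_nbr_neq:
  assumes T: "triangulation n T" and T': "triangulation n T'" and n: "3 \<le> n"
    and disj: "T \<inter> T' = {}" and neq: "T \<noteq> T'"
  shows "first_nbr n T \<noteq> first_nbr n T'"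
proof
  assume eq: "first_nbr n T = first_nbr n T'"
  show False
  proof (cases "first_nbr n T < n")
    case True
    with eq first_nbr(3)[OF T n] first_nbr(3)[OF T' n] disj show False by auto
  next
    case False
    with eq first_nbr(4)[OF T n] first_nbr(4)[OF T' n]
    have "\<And>i. {1, i} \<notin> T" "\<And>i. {1, i} \<notin> T'" by auto
    show False
    proof (cases "n = 3")
      case True
      with T T' neq show False by (simp add: triangulation_three_iff)
    next
      case False
      with n have "4 \<le> n" by simp
      with \<open>\<And>i. {1, i} \<notin> T\<close> \<open>\<And>i. {1, i} \<notin> T'\<close> disj show False
        using triangulation_isolated_first[OF T] triangulation_isolated_first[OF T'] by blast
    qed
  qed
qed

lemma proper_colouring_first_nbr:
  assumes n: "3 \<le> n"
  shows "proper_colouring (Triangs n) kneser_adj (n - 2) (\<lambda>T. first_nbr n T - 3)"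
  unfolding proper_colouring_def Triangs_def
proof (intro conjI ballI impI, unfold mem_Collect_eq)
  fix T assume "triangulation n T"
  with n show "first_nbr n T - 3 < n - 2" using first_nbr(1,2) by fastforce
next
  fix T T' assume T: "triangulation n T" and T': "triangulation n T'" and "kneser_adj T T'"
  then have "first_nbr n T \<noteq> first_nbr n T'"
    using disjoint_triangulations_first_nbr_neq[OF T T' n] unfolding kneser_adj_def by blast
  then show "first_nbr n T - 3 \<noteq> first_nbr n T' - 3"
    using first_nbr(1)[OF T n] first_nbr(1)[OF T' n] by linarith
qed

lemma triangulation_Suc_notin: "triangulation n T \<Longrightarrow> {x, Suc n} \<notin> T"
  using triangulation_subset_atLeastAtMost by fastforce

text \<open>The new vertex \<open>Suc n\<close> sits between \<open>n\<close> and 1, so the side \<open>{1, n}\<close> becomes a diagonal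
  and the new diagonals are \<open>{i, Suc n}\<close> with \<open>2 \<le> i \<le> n - 1\<close>.\<close>

lemma insert_triangulation_Suc:
  assumes T: "triangulation n T" and ab: "is_diag (Suc n) a b"
    and noncrossing: "\<And>d. d \<in> T \<Longrightarrow> \<not> crosses {a, b} d"
    and side: "{1, n} = {a, b} \<or> crosses {1, n} {a, b}"
    and new: "\<And>i. 2 \<le> i \<Longrightarrow> i + 1 \<le> n \<Longrightarrow> {i, Suc n} \<noteq> {a, b} \<Longrightarrow>
      \<exists>d\<in>insert {a, b} T. crosses {i, Suc n} d"
  shows "triangulation (Suc n) (insert {a, b} T)"
proof (rule triangulationI)
  fix d assume "d \<in> insert {a, b} T"
  then show "\<exists>i j. d = {i, j} \<and> is_diag (Suc n) i j"
  proof
    assume "d \<in> T"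
    then obtain i j where "d = {i, j}" "is_diag n i j" by (rule triangulation_obtain_diag[OF T])
    then show ?thesis using is_diag_Suc by blast
  qed (use ab in blast)
next
  fix d e assume "d \<in> insert {a, b} T" "e \<in> insert {a, b} T"
  then show "\<not> crosses d e"
    using noncrossing[of d] noncrossing[of e] triangulation_noncrossing[OF T, of d e]
      not_crosses_self[of d] crosses_commute[of d e] by auto
next
  fix i j assume ij: "is_diag (Suc n) i j" "{i, j} \<notin> insert {a, b} T"
  consider "is_diag n i j" | "i = 1" "j = n" | "j = Suc n" "2 \<le> i" "i + 1 \<le> n"
    using ij(1) unfolding is_diag_def by linarith
  then show "\<exists>e\<in>insert {a, b} T. crosses {i, j} e"
  proof cases
    case 1
    with ij(2) obtain k l where "{k, l} \<in> T" "crosses {i, j} {k, l}"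
      using triangulation_maximal[OF T] by blast
    then show ?thesis by blast
  next
    case 2
    with ij(2) side show ?thesis by auto
  next
    case 3
    with ij(2) show ?thesis using new[of i] by auto
  qed
qed

definition ear_extension :: "nat \<Rightarrow> nat set set \<Rightarrow> nat set set" where
  "ear_extension n T = insert {1, n} T"

lemma ear_extension_triangulation:
  assumes T: "triangulation n T" and n: "3 \<le> n"
  shows "triangulation (Suc n) (ear_extension n T)"
  unfolding ear_extension_def
proof (rule insert_triangulation_Suc[OF T])
  show "is_diag (Suc n) 1 n" using n unfolding is_diag_def by simp
  show "\<not> crosses {1, n} d" if dT: "d \<in> T" for d
  proof -
    obtain k l where "d = {k, l}" "is_diag n k l" using triangulation_obtain_diag[OF T dT] .
    with n show ?thesis using crosses_iff[of 1 n k l] unfolding is_diag_def by auto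
  qed
  show "\<exists>d\<in>insert {1, n} T. crosses {i, Suc n} d" if "2 \<le> i" "i + 1 \<le> n" for i
    using that crosses_iff[of i "Suc n" 1 n] by auto
qed simp

text \<open>The third vertex of the triangle of \<open>T\<close> on the side \<open>{1, n}\<close>.\<close>

definition apex :: "nat \<Rightarrow> nat set set \<Rightarrow> nat" where
  "apex n T = (LEAST x. 2 \<le> x \<and> ({x, n} \<in> T \<or> x = n - 1))"

lemma apex:
  assumes T: "triangulation n T" and n: "3 \<le> n"
  shows "2 \<le> apex n T" "apex n T \<le> n - 1"
    and "apex n T < n - 1 \<Longrightarrow> {apex n T, n} \<in> T"
    and "{x, n} \<in> T \<Longrightarrow> apex n T \<le> x \<and> x + 2 \<le> n"
proof -
  let ?P = "\<lambda>x. 2 \<le> x \<and> ({x, n} \<in> T \<or> x = n - 1)"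
  have "?P (n - 1)" using n by simp
  then have "?P (apex n T)" unfolding apex_def by (rule LeastI)
  then show "2 \<le> apex n T" "apex n T < n - 1 \<Longrightarrow> {apex n T, n} \<in> T" by auto
  show "apex n T \<le> n - 1" unfolding apex_def using \<open>?P (n - 1)\<close> by (rule Least_le)
  assume "{x, n} \<in> T"
  moreover from this have "is_diag n x n"
    using triangulation_mem_is_diag[OF T] unfolding is_diag_def by fastforce
  ultimately have "?P x" "x + 2 \<le> n" unfolding is_diag_def by auto
  moreover have "apex n T \<le> x" unfolding apex_def using \<open>?P x\<close> by (rule Least_le)
  ultimately show "apex n T \<le> x \<and> x + 2 \<le> n" by simp
qed

lemma apex_not_between:
  assumes T: "triangulation n T" and n: "3 \<le> n"
    and kl: "{k, l} \<in> T" "k < apex n T" "apex n T < l"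
  shows False
proof -
  have "is_diag n k l" using triangulation_mem_is_diag[OF T kl(1)] kl(2,3)
    unfolding is_diag_def by auto
  show False
  proof (cases "l = n")
    case True
    with kl apex(4)[OF T n, of k] show False by auto
  next
    case False
    with \<open>is_diag n k l\<close> kl(3) have "apex n T < n - 1" "l < n" unfolding is_diag_def by auto
    then have "{apex n T, n} \<in> T" "crosses {k, l} {apex n T, n}"
      using apex(3)[OF T n] kl(2,3) crosses_iff[of k l "apex n T" n] by auto
    with kl(1) show False using triangulation_noncrossing[OF T] by blast
  qed
qed

lemma apex_edge_first:
  assumes T: "triangulation n T" and n: "3 \<le> n" and y: "3 \<le> apex n T"
  shows "{1, apex n T} \<in> T"
proof (rule ccontr)
  assume "{1, apex n T} \<notin> T"
  moreover have "is_diag n 1 (apex n T)" using y apex(2)[OF T n] n unfolding is_diag_def by auto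
  ultimately obtain k l where "{k, l} \<in> T" "is_diag n k l" "crosses {1, apex n T} {k, l}"
    using triangulation_maximal[OF T] by metis
  moreover from this have "k < apex n T" "apex n T < l"
    using crosses_iff[of 1 "apex n T" k l] y unfolding is_diag_def by auto
  ultimately show False using apex_not_between[OF T n] by blast
qed

lemma apex_not_crosses:
  assumes T: "triangulation n T" and n: "3 \<le> n" and d: "d \<in> T"
  shows "\<not> crosses {apex n T, Suc n} d"
proof
  assume cr: "crosses {apex n T, Suc n} d"
  obtain k l where kl: "d = {k, l}" "is_diag n k l" using triangulation_obtain_diag[OF T d] .
  moreover have "apex n T < Suc n" using apex(2)[OF T n] by simp
  ultimately have "k < apex n T" "apex n T < l"
    using cr crosses_iff[of "apex n T" "Suc n" k l] unfolding is_diag_def by auto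
  with kl d show False using apex_not_between[OF T n] by blast
qed

definition apex_extension :: "nat \<Rightarrow> nat set set \<Rightarrow> nat set set" where
  "apex_extension n T = insert {apex n T, Suc n} T"

lemma apex_extension_triangulation:
  assumes T: "triangulation n T" and n: "3 \<le> n"
  shows "triangulation (Suc n) (apex_extension n T)"
  unfolding apex_extension_def
proof (rule insert_triangulation_Suc[OF T])
  note y = apex(1,2)[OF T n]
  show "is_diag (Suc n) (apex n T) (Suc n)" using y n unfolding is_diag_def by auto
  show "\<not> crosses {apex n T, Suc n} d" if "d \<in> T" for d
    using apex_not_crosses[OF T n that] .
  show "{1, n} = {apex n T, Suc n} \<or> crosses {1, n} {apex n T, Suc n}"
    using y n crosses_iff[of 1 n "apex n T" "Suc n"] by auto
  show "\<exists>d\<in>insert {apex n T, Suc n} T. crosses {i, Suc n} d"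
    if i: "2 \<le> i" "i + 1 \<le> n" "{i, Suc n} \<noteq> {apex n T, Suc n}" for i
  proof (cases "i < apex n T")
    case True
    then have "{1, apex n T} \<in> T" using apex_edge_first[OF T n] i by simp
    moreover have "crosses {i, Suc n} {1, apex n T}"
      using True i y crosses_iff[of i "Suc n" 1 "apex n T"] by auto
    ultimately show ?thesis by blast
  next
    case False
    with i have "apex n T < i" by auto
    then have "{apex n T, n} \<in> T" using apex(3)[OF T n] i by simp
    moreover have "crosses {i, Suc n} {apex n T, n}"
      using \<open>apex n T < i\<close> i crosses_iff[of i "Suc n" "apex n T" n] by auto
    ultimately show ?thesis by blast
  qed
qed

lemma disjoint_triangulations_apex_neq:
  assumes T: "triangulation n T" and T': "triangulation n T'" and n: "3 \<le> n"
    and disj: "T \<inter> T' = {}" and neq: "T \<noteq> T'"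
  shows "apex n T \<noteq> apex n T'"
proof
  assume eq: "apex n T = apex n T'"
  show False
  proof (cases "apex n T < n - 1")
    case True
    with eq apex(3)[OF T n] apex(3)[OF T' n] disj show False by auto
  next
    case False
    have "\<And>x. {x, n} \<notin> T" "\<And>x. {x, n} \<notin> T'"
      using False eq apex(4)[OF T n] apex(4)[OF T' n] by fastforce+
    show False
    proof (cases "n = 3")
      case True
      with T T' neq show False by (simp add: triangulation_three_iff)
    next
      case False
      with n have "4 \<le> n" by simp
      with \<open>\<And>x. {x, n} \<notin> T\<close> \<open>\<And>x. {x, n} \<notin> T'\<close> disj show False
        using triangulation_isolated_last[OF T] triangulation_isolated_last[OF T'] by blast
    qed
  qed
qed

lemma apex_extensions_disjoint:
  assumes T: "triangulation n T" and T': "triangulation n T'" and n: "3 \<le> n"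
    and disj: "T \<inter> T' = {}" and neq: "T \<noteq> T'"
  shows "apex_extension n T \<inter> apex_extension n T' = {}"
  using disjoint_triangulations_apex_neq[OF assms] disj
    triangulation_Suc_notin[OF T] triangulation_Suc_notin[OF T']
  unfolding apex_extension_def by (auto simp: doubleton_eq_iff)

lemma ear_apex_extensions_disjoint:
  assumes T: "triangulation n T" and T': "triangulation n T'" and n: "0 < n"
    and disj: "T \<inter> T' = {}"
  shows "ear_extension n T \<inter> apex_extension n T' = {}"
  using n disj triangulation_Suc_notin[OF T] triangulation_side_notin[OF T']
  unfolding ear_extension_def apex_extension_def by (auto simp: doubleton_eq_iff)

lemma fan_ear_extension_disjoint:
  assumes "triangulation n T"
  shows "fan (Suc n) \<inter> ear_extension n T = {}"
  using triangulation_Suc_notin[OF assms]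
  unfolding fan_def ear_extension_def by (auto simp: doubleton_eq_iff)

lemma proper_colouring_Triangs_Suc_reduce:
  assumes n: "3 \<le> n" and f: "proper_colouring (Triangs (Suc n)) kneser_adj k f"
  shows "0 < k" and "\<exists>g. proper_colouring (Triangs n) kneser_adj (k - 1) g"
proof -
  have f_lt: "f T < k" if "triangulation (Suc n) T" for T
    using f that unfolding proper_colouring_def Triangs_def by blast
  have f_adj: "f T \<noteq> f T'"
    if "triangulation (Suc n) T" "triangulation (Suc n) T'" "T \<inter> T' = {}" "T \<noteq> {}" for T T'
  proof -
    have "kneser_adj T T'" using that(3,4) by (rule kneser_adjI)
    with f that(1,2) show ?thesis unfolding proper_colouring_def Triangs_def by blast
  qed
  define w where "w = f (fan (Suc n))"
  have fan: "triangulation (Suc n) (fan (Suc n))" using n by (intro fan_triangulation) simp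
  then have "w < k" unfolding w_def by (rule f_lt)
  then show "0 < k" by simp
  note A = apex_extension_triangulation[OF _ n] and B = ear_extension_triangulation[OF _ n]
  have A_ne: "apex_extension n T \<noteq> {}" and B_ne: "ear_extension n T \<noteq> {}" for T
    unfolding apex_extension_def ear_extension_def by auto
  define v where "v T = (if f (apex_extension n T) = w then f (ear_extension n T)
    else f (apex_extension n T))" for T
  have v_ok: "v T < k \<and> v T \<noteq> w" if T: "T \<in> Triangs n" for T
  proof -
    have t: "triangulation n T" using T unfolding Triangs_def by simp
    have "f (ear_extension n T) \<noteq> w"
      using f_adj[OF B[OF t] fan _ B_ne] fan_ear_extension_disjoint[OF t] unfolding w_def by blast
    then show ?thesis using f_lt[OF A[OF t]] f_lt[OF B[OF t]] unfolding v_def by auto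
  qed
  have v_adj: "v T \<noteq> v T'"
    if TT': "T \<in> Triangs n" "T' \<in> Triangs n" "kneser_adj T T'" for T T'
  proof -
    have t: "triangulation n T" "triangulation n T'" using TT' unfolding Triangs_def by auto
    have disj: "T \<inter> T' = {}" "T' \<inter> T = {}" and "T \<noteq> T'"
      using TT'(3) unfolding kneser_adj_def by auto
    have "f (apex_extension n T) \<noteq> f (apex_extension n T')"
      using f_adj[OF A[OF t(1)] A[OF t(2)] _ A_ne]
        apex_extensions_disjoint[OF t n disj(1) \<open>T \<noteq> T'\<close>] by blast
    moreover have "f (ear_extension n T) \<noteq> f (apex_extension n T')"
      using f_adj[OF B[OF t(1)] A[OF t(2)] _ B_ne]
        ear_apex_extensions_disjoint[OF t _ disj(1)] n by simp
    moreover have "f (ear_extension n T') \<noteq> f (apex_extension n T)"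
      using f_adj[OF B[OF t(2)] A[OF t(1)] _ B_ne]
        ear_apex_extensions_disjoint[OF t(2,1) _ disj(2)] n by simp
    ultimately show ?thesis unfolding v_def by (simp only: if_split) metis
  qed
  show "\<exists>g. proper_colouring (Triangs n) kneser_adj (k - 1) g"
    by (rule exI, rule proper_colouring_skip_colour[where f = v, OF \<open>w < k\<close> v_ok v_adj])
qed

lemma proper_colouring_Triangs_lower_bound:
  assumes "3 \<le> n" and "proper_colouring (Triangs n) kneser_adj k f"
  shows "n - 2 \<le> k"
  using assms
proof (induction n arbitrary: k f rule: nat_induct_at_least)
  case base
  have "{} \<in> Triangs 3" unfolding Triangs_def by (simp add: triangulation_three_iff)
  with base have "f {} < k" unfolding proper_colouring_def by blast
  then show ?case by simp
next
  case (Suc n)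
  then obtain g where "proper_colouring (Triangs n) kneser_adj (k - 1) g" and "0 < k"
    using proper_colouring_Triangs_Suc_reduce by blast
  with Suc.IH have "n - 2 \<le> k - 1" by blast
  with \<open>0 < k\<close> show ?case by simp
qed

theorem theorem1p1:
  fixes n :: nat
  assumes "n \<ge> 3"
  shows "chromatic_number (Triangs n) kneser_adj = n - 2"
  using proper_colouring_first_nbr[OF assms] proper_colouring_Triangs_lower_bound[OF assms]
  by (rule chromatic_number_eqI)

end
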